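(* Let $q>0$. There is no function $u\in C^{4}(\mathbb{R}^{2})$ with $u>0$ in $\mathbb{R}^{2}$ satisfying $\Delta^{2}u+u^{-q}=0$ in $\mathbb{R}^{2}$.
   Context: $\Delta$ denotes the Laplacian on $\mathbb{R}^{2}$ and $\Delta^{2}=\Delta\Delta$. *)

theory Defs
  imports "HOL-Analysis.Analysis"
begin

definition px :: "(real \<times> real \<Rightarrow> real) \<Rightarrow> real \<times> real \<Rightarrow> real" where
  "px f z = deriv (\<lambda>t. f (t, snd z)) (fst z)"

definition py :: "(real \<times> real \<Rightarrow> real) \<Rightarrow> real \<times> real \<Rightarrow> real" where
  "py f z = deriv (\<lambda>t. f (fst z, t)) (snd z)"

fun Ck :: "nat \<Rightarrow> (real \<times> real \<Rightarrow> real) \<Rightarrow> bool" where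
  "Ck 0 f = continuous_on UNIV f"
| "Ck (Suc k) f = (continuous_on UNIV f \<and>
      (\<forall>z. (\<lambda>t. f (t, snd z)) differentiable (at (fst z)) \<and>
           (\<lambda>t. f (fst z, t)) differentiable (at (snd z))) \<and>
      Ck k (px f) \<and> Ck k (py f))"

definition laplacian :: "(real \<times> real \<Rightarrow> real) \<Rightarrow> real \<times> real \<Rightarrow> real" where
  "laplacian f z = px (px f) z + py (py f) z"

end

theory Submission
  imports Defs "HOL-Real_Asymp.Real_Asymp"
begin

(* Put w = \<Delta>u, so that \<Delta>w < 0. For a C^2 function f on the plane let A_f(r) be the integral
   of f over the circle of radius r, parametrised by the angle. Then r A_f'(r) is the flux of
   \<nabla>f through that circle, and (r A_f')' = r A_{\<Delta>f}. Since A_{\<Delta>w} < 0, the quantity r A_w'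
   decreases from 0, so r A_w' \<le> -c < 0 for r \<ge> 1 and A_w(r) \<le> C - c log r tends to -\<infinity>.
   Then (r A_u')' = r A_w forces A_u' \<rightarrow> -\<infinity>, hence A_u \<rightarrow> -\<infinity>, which is impossible
   since u > 0. *)

lemma Ck_Suc_imp_Ck: "Ck (Suc k) f \<Longrightarrow> Ck k f"
proof (induction k arbitrary: f)
  case 0
  then show ?case by simp
next
  case (Suc k)
  from Suc.prems have "continuous_on UNIV f \<and>
      (\<forall>z. (\<lambda>t. f (t, snd z)) differentiable (at (fst z)) \<and>
        (\<lambda>t. f (fst z, t)) differentiable (at (snd z))) \<and>
      Ck (Suc k) (px f) \<and> Ck (Suc k) (py f)"
    by (rule iffD1[OF Ck.simps(2)])
  then show ?case
    using Suc.IH[of "px f"] Suc.IH[of "py f"] by (intro iffD2[OF Ck.simps(2)]) blast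
qed

lemma Ck_mono: "k \<le> m \<Longrightarrow> Ck m f \<Longrightarrow> Ck k f"
  by (induction m rule: dec_induct) (use Ck_Suc_imp_Ck in blast)+

lemma px_add:
  assumes "\<forall>z. (\<lambda>t. f (t, snd z)) differentiable (at (fst z))"
    and "\<forall>z. (\<lambda>t. g (t, snd z)) differentiable (at (fst z))"
  shows "px (\<lambda>z. f z + g z) = (\<lambda>z. px f z + px g z)"
proof
  fix z
  have "((\<lambda>t. f (t, snd z) + g (t, snd z)) has_real_derivative px f z + px g z) (at (fst z))"
    using assms unfolding px_def
    by (intro DERIV_add) (auto simp: DERIV_deriv_iff_real_differentiable)
  then show "px (\<lambda>z. f z + g z) z = px f z + px g z"
    unfolding px_def[of "\<lambda>z. f z + g z"] by (rule DERIV_imp_deriv)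
qed

lemma py_add:
  assumes "\<forall>z. (\<lambda>t. f (fst z, t)) differentiable (at (snd z))"
    and "\<forall>z. (\<lambda>t. g (fst z, t)) differentiable (at (snd z))"
  shows "py (\<lambda>z. f z + g z) = (\<lambda>z. py f z + py g z)"
proof
  fix z
  have "((\<lambda>t. f (fst z, t) + g (fst z, t)) has_real_derivative py f z + py g z) (at (snd z))"
    using assms unfolding py_def
    by (intro DERIV_add) (auto simp: DERIV_deriv_iff_real_differentiable)
  then show "py (\<lambda>z. f z + g z) z = py f z + py g z"
    unfolding py_def[of "\<lambda>z. f z + g z"] by (rule DERIV_imp_deriv)
qed

lemma Ck_add: "Ck k f \<Longrightarrow> Ck k g \<Longrightarrow> Ck k (\<lambda>z. f z + g z)"
proof (induction k arbitrary: f g)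
  case 0
  then show ?case by (auto intro: continuous_on_add)
next
  case (Suc k)
  then have px: "px (\<lambda>z. f z + g z) = (\<lambda>z. px f z + px g z)"
    and py: "py (\<lambda>z. f z + g z) = (\<lambda>z. py f z + py g z)"
    by (auto intro!: px_add py_add)
  from Suc have IH: "Ck k (\<lambda>z. px f z + px g z)" "Ck k (\<lambda>z. py f z + py g z)"
    by simp_all
  from Suc.prems have cont: "continuous_on UNIV (\<lambda>z. f z + g z)"
    by (simp add: continuous_on_add)
  from Suc.prems have diff: "\<forall>z. (\<lambda>t. f (t, snd z) + g (t, snd z)) differentiable (at (fst z)) \<and>
      (\<lambda>t. f (fst z, t) + g (fst z, t)) differentiable (at (snd z))"
    by (simp add: differentiable_add)
  show ?case
    unfolding Ck.simps(2) px py using IH cont diff by blast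
qed

lemma Ck_laplacian: "Ck (k + 2) f \<Longrightarrow> Ck k (laplacian f)"
  unfolding laplacian_def[abs_def] by (intro Ck_add) (simp_all add: numeral_2_eq_2)

lemma continuous_on_laplacian: "Ck 2 f \<Longrightarrow> continuous_on UNIV (laplacian f)"
  using Ck_laplacian[of 0 f] by (simp only: add_0 Ck.simps(1))

lemma Ck1_has_derivative:
  assumes "Ck 1 f"
  shows "(f has_derivative (\<lambda>(h, k). px f z * h + py f z * k)) (at z)"
proof -
  obtain x y where z: "z = (x, y)" by (cases z)
  from assms have diff: "\<forall>z. (\<lambda>t. f (t, snd z)) differentiable (at (fst z)) \<and>
      (\<lambda>t. f (fst z, t)) differentiable (at (snd z))" and cy: "continuous_on UNIV (py f)"
    by simp_all
  have fx: "((\<lambda>x. f (x, y)) has_derivative (\<lambda>h. px f z * h)) (at x within UNIV)"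
    using diff[rule_format, of z] unfolding z px_def
    by (simp add: DERIV_deriv_iff_real_differentiable[symmetric] has_field_derivative_def)
  have fy: "((\<lambda>y. f (x, y)) has_derivative blinfun_apply (blinfun_mult_right (py f (x, y))))
      (at y within UNIV)" for x y
    using diff[rule_format, of "(x, y)"] unfolding py_def
    by (simp add: DERIV_deriv_iff_real_differentiable[symmetric] has_field_derivative_def)
  have "isCont (\<lambda>p. blinfun_mult_right (py f p)) (x, y)"
    using cy by (intro continuous_intros) (simp add: continuous_on_eq_continuous_at)
  then have cont: "continuous (at (x, y) within UNIV \<times> UNIV)
      (\<lambda>(x, y). blinfun_mult_right (py f (x, y)))"
    by (simp add: case_prod_beta')
  have "((\<lambda>(x, y). f (x, y)) has_derivative
      (\<lambda>(h, k). px f z * h + blinfun_mult_right (py f (x, y)) k)) (at (x, y) within UNIV \<times> UNIV)"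
    by (rule has_derivative_partialsI[OF fx fy cont]) auto
  then show ?thesis unfolding z by (simp add: mult.commute)
qed

lemma has_real_derivative_compose_plane:
  fixes f :: "real \<times> real \<Rightarrow> real"
  assumes "(f has_derivative (\<lambda>(h, k). a * h + b * k)) (at (\<gamma> s))"
    and "(\<gamma> has_derivative (\<lambda>h. (h * c, h * d))) (at s)"
  shows "((\<lambda>s. f (\<gamma> s)) has_real_derivative a * c + b * d) (at s)"
proof -
  have "(f \<circ> \<gamma> has_derivative (\<lambda>(h, k). a * h + b * k) \<circ> (\<lambda>h. (h * c, h * d))) (at s)"
    by (rule diff_chain_at[OF assms(2,1)])
  moreover have "(\<lambda>(h, k). a * h + b * k) \<circ> (\<lambda>h. (h * c, h * d)) = (*) (a * c + b * d)"
    by (auto simp: algebra_simps)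
  ultimately show ?thesis by (simp add: has_field_derivative_def o_def)
qed

definition polar :: "(real \<times> real \<Rightarrow> real) \<Rightarrow> real \<Rightarrow> real \<Rightarrow> real" where
  "polar g r t = g (r * cos t, r * sin t)"

text \<open>\<open>angular_deriv f r t\<close> is the \<open>t\<close>-derivative of \<open>polar f r t\<close> divided by \<open>r\<close>, which keeps it
  meaningful at \<open>r = 0\<close>.\<close>

definition radial_deriv :: "(real \<times> real \<Rightarrow> real) \<Rightarrow> real \<Rightarrow> real \<Rightarrow> real" where
  "radial_deriv f r t = cos t * polar (px f) r t + sin t * polar (py f) r t"

definition angular_deriv :: "(real \<times> real \<Rightarrow> real) \<Rightarrow> real \<Rightarrow> real \<Rightarrow> real" where
  "angular_deriv f r t = cos t * polar (py f) r t - sin t * polar (px f) r t"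

definition circle_integral :: "(real \<times> real \<Rightarrow> real) \<Rightarrow> real \<Rightarrow> real" where
  "circle_integral g r = integral {0..2*pi} (polar g r)"

definition circle_flux :: "(real \<times> real \<Rightarrow> real) \<Rightarrow> real \<Rightarrow> real" where
  "circle_flux f r = integral {0..2*pi} (radial_deriv f r)"

lemma continuous_on_polar:
  "continuous_on UNIV g \<Longrightarrow> continuous_on UNIV (\<lambda>p. polar g (fst p) (snd p))"
  unfolding polar_def
  by (rule continuous_on_compose2[of UNIV g]) (auto intro!: continuous_intros)

lemma continuous_on_polar_angle: "continuous_on UNIV g \<Longrightarrow> continuous_on S (polar g r)"
  unfolding polar_def
  by (rule continuous_on_compose2[of UNIV g]) (auto intro!: continuous_intros)

lemma polar_has_derivative_radius:
  assumes "Ck 1 f"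
  shows "((\<lambda>r. polar f r t) has_real_derivative radial_deriv f r t) (at r)"
proof -
  have "((\<lambda>r. f ((\<lambda>r. (r * cos t, r * sin t)) r)) has_real_derivative
      px f (r * cos t, r * sin t) * cos t + py f (r * cos t, r * sin t) * sin t) (at r)"
    by (rule has_real_derivative_compose_plane[OF Ck1_has_derivative[OF assms]])
      (auto intro!: derivative_eq_intros)
  then show ?thesis unfolding polar_def radial_deriv_def by (simp add: mult.commute)
qed

lemma polar_has_derivative_angle:
  assumes "Ck 1 f"
  shows "((\<lambda>t. polar f r t) has_real_derivative r * angular_deriv f r t) (at t)"
proof -
  have "((\<lambda>t. f ((\<lambda>t. (r * cos t, r * sin t)) t)) has_real_derivative
      px f (r * cos t, r * sin t) * (- r * sin t) + py f (r * cos t, r * sin t) * (r * cos t)) (at t)"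
    by (rule has_real_derivative_compose_plane[OF Ck1_has_derivative[OF assms]])
      (auto intro!: derivative_eq_intros simp: algebra_simps)
  then show ?thesis unfolding polar_def angular_deriv_def by (simp add: algebra_simps)
qed

lemma continuous_on_radial_deriv:
  "Ck 1 f \<Longrightarrow> continuous_on UNIV (\<lambda>p. radial_deriv f (fst p) (snd p))"
  unfolding radial_deriv_def
  by (intro continuous_intros continuous_on_polar[THEN continuous_on_compose2[of UNIV _ UNIV id],
        simplified]) simp_all

lemma circle_integral_has_derivative:
  assumes "Ck 1 f"
  shows "(circle_integral f has_real_derivative circle_flux f r) (at r)"
proof -
  have "((\<lambda>r. integral (cbox 0 (2*pi)) (polar f r)) has_field_derivative
      integral (cbox 0 (2*pi)) (radial_deriv f r)) (at r within UNIV)"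
  proof (rule leibniz_rule_field_derivative[where fx = "radial_deriv f"])
    show "((\<lambda>r. polar f r t) has_real_derivative radial_deriv f r t) (at r within UNIV)" for r t
      using polar_has_derivative_radius[OF assms] by simp
    show "polar f r integrable_on cbox 0 (2 * pi)" for r
      using assms by (intro integrable_continuous continuous_on_polar_angle) simp
    show "continuous_on (UNIV \<times> cbox 0 (2 * pi)) (\<lambda>(r, t). radial_deriv f r t)"
      unfolding case_prod_beta'
      by (rule continuous_on_subset[OF continuous_on_radial_deriv[OF assms]]) simp
  qed auto
  then show ?thesis unfolding circle_integral_def circle_flux_def cbox_interval by simp
qed

lemma scaled_radial_deriv_has_derivative:
  assumes "Ck 2 f"
  shows "((\<lambda>r. r * radial_deriv f r t) has_real_derivative
      radial_deriv f r t + r * (cos t * radial_deriv (px f) r t + sin t * radial_deriv (py f) r t))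
      (at r)"
  using assms unfolding radial_deriv_def[of f]
  by (auto intro!: derivative_eq_intros polar_has_derivative_radius simp: numeral_2_eq_2 algebra_simps)

lemma angular_deriv_has_derivative:
  assumes "Ck 2 f"
  shows "((\<lambda>t. angular_deriv f r t) has_real_derivative
      r * (cos t * angular_deriv (py f) r t - sin t * angular_deriv (px f) r t) - radial_deriv f r t)
      (at t)"
  using assms unfolding angular_deriv_def[of f] radial_deriv_def[of f]
  by (auto intro!: derivative_eq_intros polar_has_derivative_angle simp: numeral_2_eq_2 algebra_simps)

text \<open>The mixed partials cancel, so no symmetry of second derivatives is needed.\<close>

lemma polar_laplacian:
  "cos t * radial_deriv (px f) r t + sin t * radial_deriv (py f) r t
    + (cos t * angular_deriv (py f) r t - sin t * angular_deriv (px f) r t)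
    = polar (laplacian f) r t"
  unfolding radial_deriv_def angular_deriv_def polar_def laplacian_def
  using sin_cos_squared_add[of t] by algebra

lemma scaled_circle_flux_has_derivative:
  assumes "Ck 2 f"
  shows "((\<lambda>r. r * circle_flux f r) has_real_derivative r * circle_integral (laplacian f) r) (at r)"
proof -
  have C1: "Ck 1 f" "Ck 1 (px f)" "Ck 1 (py f)"
    using assms Ck_mono[of 1 2 f] by (simp_all add: numeral_2_eq_2)
  define d_radial where "d_radial s t = radial_deriv f s t
      + s * (cos t * radial_deriv (px f) s t + sin t * radial_deriv (py f) s t)" for s t
  define d_angular where "d_angular t = r * (cos t * angular_deriv (py f) r t - sin t * angular_deriv (px f) r t)
      - radial_deriv f r t" for t
  have leibniz: "((\<lambda>s. integral (cbox 0 (2*pi)) (\<lambda>t. s * radial_deriv f s t)) has_field_derivative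
      integral (cbox 0 (2*pi)) (d_radial r)) (at r within UNIV)"
  proof (rule leibniz_rule_field_derivative[where fx = d_radial])
    show "((\<lambda>s. s * radial_deriv f s t) has_real_derivative d_radial s t) (at s within UNIV)" for s t
      unfolding d_radial_def using scaled_radial_deriv_has_derivative[OF assms] by simp
    show "(\<lambda>t. s * radial_deriv f s t) integrable_on cbox 0 (2 * pi)" for s
      unfolding radial_deriv_def using C1
      by (intro integrable_continuous continuous_intros continuous_on_polar_angle) simp_all
    have "continuous_on UNIV (\<lambda>p. d_radial (fst p) (snd p))"
      unfolding d_radial_def using C1 by (intro continuous_intros continuous_on_radial_deriv)
    then show "continuous_on (UNIV \<times> cbox 0 (2 * pi)) (\<lambda>(s, t). d_radial s t)"
      unfolding case_prod_beta' by (rule continuous_on_subset) simp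
  qed auto
  have d_angular_integral: "(d_angular has_integral 0) {0..2*pi}"
  proof - \<comment> \<open>\<open>angular_deriv f r\<close> is \<open>2\<pi>\<close>-periodic\<close>
    have "(d_angular has_integral angular_deriv f r (2*pi) - angular_deriv f r 0) {0..2*pi}"
      unfolding d_angular_def
      using angular_deriv_has_derivative[OF assms, THEN has_field_derivative_at_within]
      by (intro fundamental_theorem_of_calculus) (simp_all add: has_real_derivative_iff_has_vector_derivative)
    then show ?thesis by (simp add: angular_deriv_def polar_def)
  qed
  have "d_radial r = (\<lambda>t. r * polar (laplacian f) r t - d_angular t)"
    unfolding d_radial_def d_angular_def polar_laplacian[symmetric] by (simp add: algebra_simps)
  moreover have "polar (laplacian f) r integrable_on {0..2*pi}"
    by (intro integrable_continuous_interval continuous_on_polar_angle continuous_on_laplacian assms)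
  ultimately have "integral {0..2*pi} (d_radial r) = r * circle_integral (laplacian f) r"
    unfolding circle_integral_def
    by (simp add: integral_diff[OF integrable_on_mult_right has_integral_integrable[OF d_angular_integral]]
        integral_unique[OF d_angular_integral])
  with leibniz show ?thesis
    unfolding circle_flux_def cbox_interval by simp
qed

lemma circle_integral_ge:
  assumes "\<And>z. m \<le> g z" and "continuous_on UNIV g"
  shows "2 * pi * m \<le> circle_integral g r"
proof -
  have "integral {0..2*pi} (\<lambda>t. m) \<le> integral {0..2*pi} (polar g r)"
    using assms
    by (intro integral_le integrable_continuous_interval continuous_on_polar_angle)
      (auto simp: polar_def)
  then show ?thesis unfolding circle_integral_def by simp
qed

lemma circle_integral_neg:
  assumes "\<And>z. g z < 0" and "continuous_on UNIV g"
  shows "circle_integral g r < 0"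
proof -
  have cont: "continuous_on {0..2*pi} (polar g r)"
    using assms(2) by (rule continuous_on_polar_angle)
  obtain t0 where "\<And>t. t \<in> {0..2*pi} \<Longrightarrow> polar g r t \<le> polar g r t0"
    using continuous_attains_sup[OF compact_Icc _ cont] by fastforce
  with cont have "integral {0..2*pi} (polar g r) \<le> integral {0..2*pi} (\<lambda>t. polar g r t0)"
    by (intro integral_le integrable_continuous_interval) auto
  then have "circle_integral g r \<le> 2 * pi * polar g r t0"
    unfolding circle_integral_def by simp
  moreover have "polar g r t0 < 0"
    unfolding polar_def using assms(1) .
  then have "2 * pi * polar g r t0 < 0"
    by (simp add: mult_pos_neg)
  ultimately show ?thesis
    by linarith
qed

lemma increment_le_if_deriv_le:
  fixes F G f g :: "real \<Rightarrow> real"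
  assumes "a \<le> b"
    and "\<And>x. a \<le> x \<Longrightarrow> x \<le> b \<Longrightarrow> (F has_real_derivative f x) (at x)"
    and "\<And>x. a \<le> x \<Longrightarrow> x \<le> b \<Longrightarrow> (G has_real_derivative g x) (at x)"
    and "\<And>x. a \<le> x \<Longrightarrow> x \<le> b \<Longrightarrow> f x \<le> g x"
  shows "F b - F a \<le> G b - G a"
proof -
  have "\<exists>y. DERIV (\<lambda>x. F x - G x) x :> y \<and> y \<le> 0" if "a \<le> x" "x \<le> b" for x
    using assms(2-4)[OF that] by (intro exI[of _ "f x - g x"]) (auto intro: DERIV_diff)
  then have "F b - G b \<le> F a - G a"
    using DERIV_nonpos_imp_nonincreasing[OF \<open>a \<le> b\<close>] by blast
  then show ?thesis by simp
qed

lemma filterlim_at_bot_if_deriv_at_bot: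
  fixes F f :: "real \<Rightarrow> real"
  assumes deriv: "\<And>r. (F has_real_derivative f r) (at r)"
    and lim: "filterlim f at_bot at_top"
  shows "filterlim F at_bot at_top"
proof -
  obtain R where R: "\<And>r. R \<le> r \<Longrightarrow> f r \<le> -1"
    using lim[unfolded filterlim_at_bot, rule_format, of "-1"]
    unfolding eventually_at_top_linorder by blast
  have "F r - F R \<le> - r - - R" if "R \<le> r" for r
    using that R deriv
    by (intro increment_le_if_deriv_le[where g = "\<lambda>_. -1"]) (auto intro!: derivative_eq_intros)
  then have "F r \<le> F R + R - r" if "R \<le> r" for r
    using that by fastforce
  then have "eventually (\<lambda>r. F r \<le> F R + R - r) at_top"
    unfolding eventually_at_top_linorder by (intro exI[of _ R]) auto
  moreover have "filterlim (\<lambda>r. F R + R - r) at_bot at_top"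
    by real_asymp
  ultimately show ?thesis
    by (rule filterlim_at_bot_mono[rotated])
qed

text \<open>\<open>F' = M\<close> together with \<open>(r M)' = r A\<close> is the radial form of \<open>\<Delta>F = A\<close> in the plane.\<close>

lemma radial_profile_at_bot_if_source_neg:
  fixes F M A :: "real \<Rightarrow> real"
  assumes F: "\<And>r. (F has_real_derivative M r) (at r)"
    and flux: "\<And>r. ((\<lambda>r. r * M r) has_real_derivative r * A r) (at r)"
    and neg: "\<And>r. A r < 0"
  shows "filterlim F at_bot at_top"
proof -
  define c where "c = - M 1"
  have "continuous_on {0..1} (\<lambda>r. r * M r)"
    using flux by (intro continuous_at_imp_continuous_on ballI DERIV_isCont)
  then have "1 * M 1 < 0 * M 0"
  proof (rule DERIV_neg_imp_decreasing_open[rotated 2])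
    show "\<exists>y. DERIV (\<lambda>r. r * M r) x :> y \<and> y < 0" if "0 < x" "x < 1" for x
      using flux[of x] mult_pos_neg[OF that(1) neg] by blast
  qed simp
  then have c: "c > 0"
    unfolding c_def by simp
  have "r * M r \<le> - c" if "1 \<le> r" for r
  proof -
    have "r * M r \<le> 1 * M 1"
    proof (rule DERIV_nonpos_imp_nonincreasing[OF that])
      show "\<exists>y. DERIV (\<lambda>r. r * M r) x :> y \<and> y \<le> 0" if "1 \<le> x" for x
        using flux[of x] mult_pos_neg[OF _ neg, of x x] that by (intro exI[of _ "x * A x"]) simp
    qed
    then show ?thesis unfolding c_def by simp
  qed
  then have "M r \<le> - c * (1 / r)" if "1 \<le> r" for r
    using that by (simp add: field_simps)
  then have "F r - F 1 \<le> - c * ln r - - c * ln 1" if "1 \<le> r" for r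
    using that F
    by (intro increment_le_if_deriv_le[where g = "\<lambda>x. - c * (1 / x)"])
      (auto intro!: derivative_eq_intros)
  then have "F r \<le> F 1 - c * ln r" if "1 \<le> r" for r
    using that by fastforce
  then have "eventually (\<lambda>r. F r \<le> F 1 - c * ln r) at_top"
    unfolding eventually_at_top_linorder by (intro exI[of _ 1]) auto
  moreover have "filterlim (\<lambda>r. F 1 - c * ln r) at_bot at_top"
    using c by real_asymp
  ultimately show ?thesis
    by (rule filterlim_at_bot_mono[rotated])
qed

lemma radial_flux_at_bot_if_source_at_bot:
  fixes M A :: "real \<Rightarrow> real"
  assumes flux: "\<And>r. ((\<lambda>r. r * M r) has_real_derivative r * A r) (at r)"
    and lim: "filterlim A at_bot at_top"
  shows "filterlim M at_bot at_top"
proof -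
  obtain R0 where R0: "\<And>r. R0 \<le> r \<Longrightarrow> A r \<le> -1"
    using lim[unfolded filterlim_at_bot, rule_format, of "-1"]
    unfolding eventually_at_top_linorder by blast
  define R where "R = max R0 1"
  define K where "K = R * M R + R\<^sup>2 / 2"
  have "r * M r - R * M R \<le> - (r\<^sup>2 / 2) - - (R\<^sup>2 / 2)" if "R \<le> r" for r
  proof (rule increment_le_if_deriv_le[where g = "\<lambda>x. - x"])
    show "x * A x \<le> - x" if "R \<le> x" for x
      using mult_left_mono[OF R0, of x "x"] that by (simp add: R_def)
  qed (use that flux in \<open>auto intro!: derivative_eq_intros\<close>)
  then have "M r \<le> K / r - r / 2" if "R \<le> r" for r
  proof -
    have "r > 0"
      using that by (simp add: R_def)
    moreover have "M r * r \<le> K - r\<^sup>2 / 2"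
      using that \<open>R \<le> r \<Longrightarrow> _\<close> by (simp add: K_def algebra_simps)
    ultimately have "M r \<le> (K - r\<^sup>2 / 2) / r"
      by (simp add: pos_le_divide_eq)
    also have "\<dots> = K / r - r / 2"
      using \<open>r > 0\<close> by (simp add: field_simps power2_eq_square)
    finally show ?thesis .
  qed
  then have "eventually (\<lambda>r. M r \<le> K / r - r / 2) at_top"
    unfolding eventually_at_top_linorder by (intro exI[of _ R]) auto
  moreover have "filterlim (\<lambda>r. K / r - r / 2) at_bot at_top"
    by real_asymp
  ultimately show ?thesis
    by (rule filterlim_at_bot_mono[rotated])
qed

lemma bilaplacian_neg_imp_not_bdd_below:
  assumes u: "Ck 2 u" and w: "Ck 2 (laplacian u)"
    and neg: "\<And>z. laplacian (laplacian u) z < 0"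
  shows "\<not> bdd_below (range u)"
proof
  assume "bdd_below (range u)"
  then obtain m where m: "\<And>z. m \<le> u z"
    by (auto simp: bdd_below_def)
  have C1: "Ck 1 u" "Ck 1 (laplacian u)"
    using u w Ck_mono[of 1 2] by simp_all
  have "filterlim (circle_integral (laplacian u)) at_bot at_top"
    using circle_integral_has_derivative[OF C1(2)] scaled_circle_flux_has_derivative[OF w]
      circle_integral_neg[OF neg continuous_on_laplacian[OF w]]
    by (rule radial_profile_at_bot_if_source_neg)
  then have "filterlim (circle_flux u) at_bot at_top"
    using scaled_circle_flux_has_derivative[OF u] radial_flux_at_bot_if_source_at_bot by blast
  then have "filterlim (circle_integral u) at_bot at_top"
    using circle_integral_has_derivative[OF C1(1)] filterlim_at_bot_if_deriv_at_bot by blast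
  then obtain r where "circle_integral u r \<le> 2 * pi * m - 1"
    unfolding filterlim_at_bot eventually_at_top_linorder by (meson order_refl)
  moreover have "2 * pi * m \<le> circle_integral u r"
    using m C1(1) by (intro circle_integral_ge) simp_all
  ultimately show False
    by simp
qed

theorem theorem1p2:
  fixes q :: real
  assumes "q > 0"
  shows "\<not> (\<exists>u :: real \<times> real \<Rightarrow> real. Ck 4 u \<and> (\<forall>z. u z > 0) \<and>
            (\<forall>z. laplacian (laplacian u) z + u z powr (- q) = 0))"
proof
  assume "\<exists>u :: real \<times> real \<Rightarrow> real. Ck 4 u \<and> (\<forall>z. u z > 0) \<and>
            (\<forall>z. laplacian (laplacian u) z + u z powr (- q) = 0)"
  then obtain u :: "real \<times> real \<Rightarrow> real" where C4: "Ck 4 u" and pos: "\<And>z. u z > 0"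
    and eq: "\<And>z. laplacian (laplacian u) z + u z powr (- q) = 0"
    by blast
  have "Ck 2 u"
    using Ck_mono[of 2 4] C4 by simp
  moreover have "Ck 2 (laplacian u)"
    using Ck_laplacian[of 2 u] C4 by simp
  moreover have "laplacian (laplacian u) z < 0" for z
    using eq[of z] pos[of z] by (smt (verit) powr_gt_zero)
  moreover have "bdd_below (range u)"
    using pos by (intro bdd_belowI2[of _ 0]) (simp add: less_imp_le)
  ultimately show False
    using bilaplacian_neg_imp_not_bdd_below by blast
qed

end
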